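(* The function $$u(z)=-8\frac{(1-|z|^2)^4}{|1-z|^2}+\frac{3}{2}\frac{(1-|z|^2)^4}{|1-z|^4}-6\frac{(1-|z|^2)^5}{|1-z|^4}-3\frac{(1-|z|^2)^5}{|1-z|^6}+\frac{(1-|z|^2)^7}{|1-z|^8},\quad z\in\mathbb{D},$$ is $w_2$-biharmonic in $\mathbb{D}$, i.e. $\Delta\big((1-|z|^2)^{-2}\Delta u\big)=0$ in $\mathbb{D}$.
   Context: $\mathbb{D}$ is the open unit disc and $\Delta=\partial^2/\partial z\partial\bar z$. The weight is $w_2(z)=(1-|z|^2)^2$, and $u$ is called $w_2$-biharmonic if $\Delta w_2^{-1}\Delta u=0$ in $\mathbb{D}$. *)

theory Defs
  imports "HOL-Analysis.Analysis"
begin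

text \<open>Partial derivatives in x = Re z and y = Im z of a real-valued function on the
  complex plane, and the Laplacian normalised as
  Delta = d^2/(dz d conj z) = (1/4)(d^2/dx^2 + d^2/dy^2).\<close>

definition pdx :: "(complex \<Rightarrow> real) \<Rightarrow> complex \<Rightarrow> real" where
  "pdx f z = deriv (\<lambda>t::real. f (z + complex_of_real t)) 0"

definition pdy :: "(complex \<Rightarrow> real) \<Rightarrow> complex \<Rightarrow> real" where
  "pdy f z = deriv (\<lambda>t::real. f (z + \<i> * complex_of_real t)) 0"

definition wlap :: "(complex \<Rightarrow> real) \<Rightarrow> complex \<Rightarrow> real" where
  "wlap f z = (pdx (pdx f) z + pdy (pdy f) z) / 4"

definition w2 :: "complex \<Rightarrow> real" where
  "w2 z = (1 - (cmod z)^2)^2"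

definition w2_biharmonic :: "(complex \<Rightarrow> real) \<Rightarrow> bool" where
  "w2_biharmonic u \<longleftrightarrow>
     (\<forall>z \<in> ball 0 1. wlap (\<lambda>\<zeta>. wlap u \<zeta> / w2 \<zeta>) z = 0)"

end

theory Submission
  imports Defs
begin

text \<open>Write \<open>S = 1 - |z|\<^sup>2\<close> and \<open>Q = |1 - z|\<^sup>2\<close>. The monomials \<open>S\<^sup>a Q\<^sup>-\<^sup>b\<close> span a space
  closed under the Laplacian, since
  \<open>\<Delta>(S\<^sup>a Q\<^sup>-\<^sup>b) = a(a-1) S\<^sup>a\<^sup>-\<^sup>2 Q\<^sup>-\<^sup>b - a(a-b) S\<^sup>a\<^sup>-\<^sup>1 Q\<^sup>-\<^sup>b + b(b-a) S\<^sup>a Q\<^sup>-\<^sup>b\<^sup>-\<^sup>1\<close>,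
  and division by \<open>w\<^sub>2 = S\<^sup>2\<close> just lowers \<open>a\<close> by two. Hence \<open>\<Delta>(w\<^sub>2\<^sup>-\<^sup>1 \<Delta>u)\<close> is an explicit
  combination of monomials, and its coefficients cancel.\<close>

definition has_wlap_on :: "(complex \<Rightarrow> real) \<Rightarrow> (complex \<Rightarrow> real) \<Rightarrow> complex set \<Rightarrow> bool" where
  "has_wlap_on f F S \<longleftrightarrow> (\<exists>fx fy fxx fyy. \<forall>w\<in>S.
     ((\<lambda>t. f (w + of_real t)) has_real_derivative fx w) (at 0) \<and>
     ((\<lambda>t. f (w + \<i> * of_real t)) has_real_derivative fy w) (at 0) \<and>
     ((\<lambda>t. fx (w + of_real t)) has_real_derivative fxx w) (at 0) \<and>
     ((\<lambda>t. fy (w + \<i> * of_real t)) has_real_derivative fyy w) (at 0) \<and>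
     F w = (fxx w + fyy w) / 4)"

lemma has_wlap_on_zero: "has_wlap_on (\<lambda>w. 0) (\<lambda>w. 0) S"
  unfolding has_wlap_on_def by (intro exI[of _ "\<lambda>w. 0"]) simp

lemma has_wlap_on_add:
  assumes "has_wlap_on f F S" "has_wlap_on g G S"
  shows "has_wlap_on (\<lambda>w. f w + g w) (\<lambda>w. F w + G w) S"
  using assms unfolding has_wlap_on_def
  apply (elim exE)
  \<comment> \<open>\<open>elim exE\<close> interleaves the witnesses of the two hypotheses\<close>
  subgoal for fx gx fy gy fxx gxx fyy gyy
    by (rule exI[of _ "\<lambda>w. fx w + gx w"], rule exI[of _ "\<lambda>w. fy w + gy w"],
        rule exI[of _ "\<lambda>w. fxx w + gxx w"], rule exI[of _ "\<lambda>w. fyy w + gyy w"])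
      (simp add: DERIV_add add_divide_distrib)
  done

lemma has_wlap_on_cmult:
  assumes "has_wlap_on f F S"
  shows "has_wlap_on (\<lambda>w. c * f w) (\<lambda>w. c * F w) S"
  using assms unfolding has_wlap_on_def
  apply (elim exE)
  subgoal for fx fy fxx fyy
    by (rule exI[of _ "\<lambda>w. c * fx w"], rule exI[of _ "\<lambda>w. c * fy w"],
        rule exI[of _ "\<lambda>w. c * fxx w"], rule exI[of _ "\<lambda>w. c * fyy w"])
      (simp add: DERIV_cmult flip: distrib_left)
  done

lemma eventually_line_in_open:
  fixes w d :: complex
  assumes "open S" "w \<in> S"
  shows "\<forall>\<^sub>F t in nhds 0. w + d * of_real t \<in> S"
proof -
  have "isCont (\<lambda>t::real. w + d * of_real t) 0"
    by (intro continuous_intros)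
  then have "((\<lambda>t::real. w + d * of_real t) \<longlongrightarrow> w) (nhds 0)"
    by (simp add: tendsto_nhds_iff isCont_def)
  then show ?thesis using assms by (rule topological_tendstoD)
qed

lemma wlap_eq_if_has_wlap_on:
  assumes "has_wlap_on f F S" "open S" "w \<in> S"
  shows "wlap f w = F w"
proof -
  obtain fx fy fxx fyy where f: "\<forall>w\<in>S.
     ((\<lambda>t. f (w + of_real t)) has_real_derivative fx w) (at 0) \<and>
     ((\<lambda>t. f (w + \<i> * of_real t)) has_real_derivative fy w) (at 0) \<and>
     ((\<lambda>t. fx (w + of_real t)) has_real_derivative fxx w) (at 0) \<and>
     ((\<lambda>t. fy (w + \<i> * of_real t)) has_real_derivative fyy w) (at 0) \<and>
     F w = (fxx w + fyy w) / 4"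
    using assms(1) unfolding has_wlap_on_def by blast
  have pdx_eq: "pdx f v = fx v" and pdy_eq: "pdy f v = fy v" if "v \<in> S" for v
    using f that unfolding pdx_def pdy_def by (blast intro: DERIV_imp_deriv)+
  have "pdx (pdx f) w = deriv (\<lambda>t. fx (w + of_real t)) 0"
    unfolding pdx_def[of "pdx f"] using eventually_line_in_open[OF assms(2,3), of 1]
    by (intro deriv_cong_ev) (auto elim!: eventually_mono simp: pdx_eq)
  also have "\<dots> = fxx w" using f assms(3) by (blast intro: DERIV_imp_deriv)
  finally have xx: "pdx (pdx f) w = fxx w" .
  have "pdy (pdy f) w = deriv (\<lambda>t. fy (w + \<i> * of_real t)) 0"
    unfolding pdy_def[of "pdy f"] using eventually_line_in_open[OF assms(2,3), of \<i>]
    by (intro deriv_cong_ev) (auto elim!: eventually_mono simp: pdy_eq)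
  also have "\<dots> = fyy w" using f assms(3) by (blast intro: DERIV_imp_deriv)
  finally have yy: "pdy (pdy f) w = fyy w" .
  show ?thesis unfolding wlap_def xx yy using f assms(3) by simp
qed

lemma has_wlap_on_cong:
  assumes "has_wlap_on f F S" "open S" "\<And>w. w \<in> S \<Longrightarrow> g w = f w"
  shows "has_wlap_on g F S"
proof -
  have line_cong: "((\<lambda>t. g (w + d * of_real t)) has_real_derivative D) (at 0) \<longleftrightarrow>
      ((\<lambda>t. f (w + d * of_real t)) has_real_derivative D) (at 0)" if "w \<in> S" for w d D
    using eventually_line_in_open[OF assms(2) that, of d]
    by (intro DERIV_cong_ev) (auto elim!: eventually_mono simp: assms(3))
  show ?thesis
    using assms(1) line_cong[where d = 1] line_cong[where d = \<i>] unfolding has_wlap_on_def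
    by simp
qed

definition defect :: "real \<Rightarrow> real \<Rightarrow> real" where
  "defect x y = 1 - x\<^sup>2 - y\<^sup>2"

definition sq_dist_one :: "real \<Rightarrow> real \<Rightarrow> real" where
  "sq_dist_one x y = (1 - x)\<^sup>2 + y\<^sup>2"

definition monomial :: "real \<Rightarrow> real \<Rightarrow> real \<Rightarrow> real \<Rightarrow> real" where
  "monomial a b x y = defect x y powr a * sq_dist_one x y powr (- b)"

definition monomial_dx :: "real \<Rightarrow> real \<Rightarrow> real \<Rightarrow> real \<Rightarrow> real" where
  "monomial_dx a b x y = - 2 * a * x * monomial (a - 1) b x y + 2 * b * (1 - x) * monomial a (b + 1) x y"

definition monomial_dy :: "real \<Rightarrow> real \<Rightarrow> real \<Rightarrow> real \<Rightarrow> real" where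
  "monomial_dy a b x y = - 2 * a * y * monomial (a - 1) b x y - 2 * b * y * monomial a (b + 1) x y"

definition monomial_dxx :: "real \<Rightarrow> real \<Rightarrow> real \<Rightarrow> real \<Rightarrow> real" where
  "monomial_dxx a b x y = - 2 * a * monomial (a - 1) b x y - 2 * a * x * monomial_dx (a - 1) b x y
     - 2 * b * monomial a (b + 1) x y + 2 * b * (1 - x) * monomial_dx a (b + 1) x y"

definition monomial_dyy :: "real \<Rightarrow> real \<Rightarrow> real \<Rightarrow> real \<Rightarrow> real" where
  "monomial_dyy a b x y = - 2 * a * monomial (a - 1) b x y - 2 * a * y * monomial_dy (a - 1) b x y
     - 2 * b * monomial a (b + 1) x y - 2 * b * y * monomial_dy a (b + 1) x y"

lemma monomial_has_real_derivative_x: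
  assumes "defect x y > 0" "sq_dist_one x y > 0"
  shows "((\<lambda>x. monomial a b x y) has_real_derivative monomial_dx a b x y) (at x)"
proof -
  have minus: "- b - 1 = - 1 - b" by simp
  from assms show ?thesis unfolding monomial_dx_def monomial_def defect_def sq_dist_one_def
    by (auto intro!: derivative_eq_intros simp: algebra_simps minus)
qed

lemma monomial_has_real_derivative_y:
  assumes "defect x y > 0" "sq_dist_one x y > 0"
  shows "((\<lambda>y. monomial a b x y) has_real_derivative monomial_dy a b x y) (at y)"
proof -
  have minus: "- b - 1 = - 1 - b" by simp
  from assms show ?thesis unfolding monomial_dy_def monomial_def defect_def sq_dist_one_def
    by (auto intro!: derivative_eq_intros simp: algebra_simps minus)
qed

lemma monomial_dx_has_real_derivative_x:
  assumes "defect x y > 0" "sq_dist_one x y > 0"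
  shows "((\<lambda>x. monomial_dx a b x y) has_real_derivative monomial_dxx a b x y) (at x)"
proof -
  have "((\<lambda>x. - 2 * a * x * monomial (a - 1) b x y + 2 * b * (1 - x) * monomial a (b + 1) x y)
      has_real_derivative monomial_dxx a b x y) (at x)"
    unfolding monomial_dxx_def
    by (auto intro!: derivative_eq_intros monomial_has_real_derivative_x[OF assms] simp: algebra_simps)
  then show ?thesis by (simp add: monomial_dx_def)
qed

lemma monomial_dy_has_real_derivative_y:
  assumes "defect x y > 0" "sq_dist_one x y > 0"
  shows "((\<lambda>y. monomial_dy a b x y) has_real_derivative monomial_dyy a b x y) (at y)"
proof -
  have "((\<lambda>y. - 2 * a * y * monomial (a - 1) b x y - 2 * b * y * monomial a (b + 1) x y)
      has_real_derivative monomial_dyy a b x y) (at y)"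
    unfolding monomial_dyy_def
    by (auto intro!: derivative_eq_intros monomial_has_real_derivative_y[OF assms] simp: algebra_simps)
  then show ?thesis by (simp add: monomial_dy_def)
qed

lemma monomial_shift:
  assumes "defect x y > 0" "sq_dist_one x y > 0"
  shows "monomial a' b' x y = defect x y powr (a' - a) * sq_dist_one x y powr (b - b') * monomial a b x y"
proof -
  have "defect x y powr a * defect x y powr (a' - a) = defect x y powr a'"
    by (simp flip: powr_add)
  moreover have "sq_dist_one x y powr (- b) * sq_dist_one x y powr (b - b') = sq_dist_one x y powr (- b')"
    by (simp flip: powr_add)
  ultimately show ?thesis unfolding monomial_def by (metis mult.assoc mult.commute)
qed

lemma monomial_laplacian:
  assumes S: "defect x y > 0" and Q: "sq_dist_one x y > 0"
  shows "(monomial_dxx a b x y + monomial_dyy a b x y) / 4 =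
    a * (a - 1) * monomial (a - 2) b x y - a * (a - b) * monomial (a - 1) b x y
      + b * (b - a) * monomial a (b + 1) x y"
proof -
  let ?M = "monomial (a - 2) b x y" and ?S = "defect x y" and ?Q = "sq_dist_one x y"
  have m0: "monomial (a - 1 - 1) b x y = ?M" by simp
  have m1: "monomial (a - 1) b x y = ?S * ?M"
    using monomial_shift[OF S Q, of "a - 1" b "a - 2" b] S Q by simp
  have m2: "monomial (a - 1) (b + 1) x y = ?S / ?Q * ?M"
    using monomial_shift[OF S Q, of "a - 1" "b + 1" "a - 2" b] S Q by (simp add: powr_minus_divide)
  have m3: "monomial a (b + 1) x y = ?S\<^sup>2 / ?Q * ?M"
    using monomial_shift[OF S Q, of a "b + 1" "a - 2" b] S Q by (simp add: powr_minus_divide)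
  have m4: "monomial a (b + 1 + 1) x y = ?S\<^sup>2 / ?Q\<^sup>2 * ?M"
    using monomial_shift[OF S Q, of a "b + 2" "a - 2" b] S Q by (simp add: powr_minus_divide add.assoc)
  show ?thesis
    unfolding monomial_dxx_def monomial_dyy_def monomial_dx_def monomial_dy_def m0 m1 m2 m3 m4
    using Q by (simp add: field_simps) (simp add: defect_def sq_dist_one_def, algebra)
qed

definition cmonomial :: "real \<Rightarrow> real \<Rightarrow> complex \<Rightarrow> real" where
  "cmonomial a b w = monomial a b (Re w) (Im w)"

lemma defect_Re_Im: "defect (Re w) (Im w) = 1 - (cmod w)\<^sup>2"
  by (simp add: defect_def cmod_power2)

lemma sq_dist_one_Re_Im: "sq_dist_one (Re w) (Im w) = (cmod (1 - w))\<^sup>2"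
  by (simp add: sq_dist_one_def cmod_power2)

lemma
  assumes "w \<in> ball 0 1"
  shows defect_pos_ball: "defect (Re w) (Im w) > 0"
    and sq_dist_one_pos_ball: "sq_dist_one (Re w) (Im w) > 0"
proof -
  have "cmod w < 1" using assms by simp
  then show "defect (Re w) (Im w) > 0"
    unfolding defect_Re_Im by (simp add: power_less_one_iff)
  show "sq_dist_one (Re w) (Im w) > 0"
    unfolding sq_dist_one_Re_Im using assms by auto
qed

lemma cmonomial_of_nat:
  assumes "w \<in> ball 0 1"
  shows "cmonomial (real n) (real m) w = (1 - (cmod w)\<^sup>2) ^ n / (cmod (1 - w)) ^ (2 * m)"
  using defect_pos_ball[OF assms] sq_dist_one_pos_ball[OF assms]
  by (simp add: cmonomial_def monomial_def powr_minus_divide powr_realpow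
      defect_Re_Im sq_dist_one_Re_Im power_mult)

lemma cmonomial_divide_w2:
  assumes "w \<in> ball 0 1"
  shows "cmonomial a b w / w2 w = cmonomial (a - 2) b w"
proof -
  have S: "defect (Re w) (Im w) > 0" and Q: "sq_dist_one (Re w) (Im w) > 0"
    using assms by (rule defect_pos_ball, rule sq_dist_one_pos_ball)
  have "w2 w = (defect (Re w) (Im w))\<^sup>2"
    by (simp add: w2_def defect_Re_Im)
  then show ?thesis
    using monomial_shift[OF S Q, of "a - 2" b a b] S Q
    by (simp add: cmonomial_def powr_minus_divide)
qed

lemma has_real_derivative_along_Re:
  assumes "(g has_real_derivative D) (at (Re w))"
  shows "((\<lambda>t. g (Re (w + of_real t))) has_real_derivative D) (at 0)"
  using DERIV_shift[of g D 0 "Re w"] assms by (simp add: add.commute)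

lemma has_real_derivative_along_Im:
  assumes "(g has_real_derivative D) (at (Im w))"
  shows "((\<lambda>t. g (Im (w + \<i> * of_real t))) has_real_derivative D) (at 0)"
  using DERIV_shift[of g D 0 "Im w"] assms by (simp add: add.commute)

lemma has_wlap_on_cmonomial:
  "has_wlap_on (cmonomial a b)
     (\<lambda>w. a * (a - 1) * cmonomial (a - 2) b w - a * (a - b) * cmonomial (a - 1) b w
        + b * (b - a) * cmonomial a (b + 1) w) (ball 0 1)"
  unfolding has_wlap_on_def
proof (intro exI ballI conjI)
  fix w :: complex
  assume "w \<in> ball 0 1"
  then have S: "defect (Re w) (Im w) > 0" and Q: "sq_dist_one (Re w) (Im w) > 0"
    by (rule defect_pos_ball, rule sq_dist_one_pos_ball)
  show "((\<lambda>t. cmonomial a b (w + of_real t)) has_real_derivative monomial_dx a b (Re w) (Im w)) (at 0)"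
    using has_real_derivative_along_Re[OF monomial_has_real_derivative_x[OF S Q]]
    by (simp add: cmonomial_def)
  show "((\<lambda>t. cmonomial a b (w + \<i> * of_real t)) has_real_derivative monomial_dy a b (Re w) (Im w)) (at 0)"
    using has_real_derivative_along_Im[OF monomial_has_real_derivative_y[OF S Q]]
    by (simp add: cmonomial_def)
  show "((\<lambda>t. (\<lambda>w. monomial_dx a b (Re w) (Im w)) (w + of_real t))
      has_real_derivative monomial_dxx a b (Re w) (Im w)) (at 0)"
    using has_real_derivative_along_Re[OF monomial_dx_has_real_derivative_x[OF S Q]] by simp
  show "((\<lambda>t. (\<lambda>w. monomial_dy a b (Re w) (Im w)) (w + \<i> * of_real t))
      has_real_derivative monomial_dyy a b (Re w) (Im w)) (at 0)"
    using has_real_derivative_along_Im[OF monomial_dy_has_real_derivative_y[OF S Q]] by simp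
  show "a * (a - 1) * cmonomial (a - 2) b w - a * (a - b) * cmonomial (a - 1) b w
      + b * (b - a) * cmonomial a (b + 1) w =
    ((\<lambda>w. monomial_dxx a b (Re w) (Im w)) w + (\<lambda>w. monomial_dyy a b (Re w) (Im w)) w) / 4"
    using monomial_laplacian[OF S Q] by (simp add: cmonomial_def)
qed

definition monomial_comb :: "(real \<times> real \<times> real) list \<Rightarrow> complex \<Rightarrow> real" where
  "monomial_comb cs w = (\<Sum>(c, a, b) \<leftarrow> cs. c * cmonomial a b w)"

fun laplacian_terms :: "(real \<times> real \<times> real) list \<Rightarrow> (real \<times> real \<times> real) list" where
  "laplacian_terms [] = []"
| "laplacian_terms ((c, a, b) # cs) =
     (c * a * (a - 1), a - 2, b) # (- c * a * (a - b), a - 1, b) # (c * b * (b - a), a, b + 1)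
       # laplacian_terms cs"

lemma has_wlap_on_monomial_comb:
  "has_wlap_on (monomial_comb cs) (monomial_comb (laplacian_terms cs)) (ball 0 1)"
proof (induction cs rule: laplacian_terms.induct)
  case 1
  show ?case using has_wlap_on_zero by (simp add: monomial_comb_def)
next
  case (2 c a b cs)
  have "has_wlap_on (\<lambda>w. c * cmonomial a b w + monomial_comb cs w)
      (\<lambda>w. c * (a * (a - 1) * cmonomial (a - 2) b w - a * (a - b) * cmonomial (a - 1) b w
        + b * (b - a) * cmonomial a (b + 1) w) + monomial_comb (laplacian_terms cs) w) (ball 0 1)"
    by (intro has_wlap_on_add has_wlap_on_cmult has_wlap_on_cmonomial 2)
  then show ?case
    by (simp add: monomial_comb_def algebra_simps)
qed

lemma monomial_comb_divide_w2:
  assumes "w \<in> ball 0 1"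
  shows "monomial_comb cs w / w2 w = monomial_comb (map (\<lambda>(c, a, b). (c, a - 2, b)) cs) w"
  by (induction cs)
    (auto simp: monomial_comb_def add_divide_distrib cmonomial_divide_w2[OF assms, symmetric])

theorem proposition3p2:
  fixes u :: "complex \<Rightarrow> real"
  defines "u \<equiv> \<lambda>z. - 8 * (1 - (cmod z)^2)^4 / (cmod (1 - z))^2
                 + 3/2 * (1 - (cmod z)^2)^4 / (cmod (1 - z))^4
                 - 6 * (1 - (cmod z)^2)^5 / (cmod (1 - z))^4
                 - 3 * (1 - (cmod z)^2)^5 / (cmod (1 - z))^6
                 + (1 - (cmod z)^2)^7 / (cmod (1 - z))^8"
  shows "w2_biharmonic u"
proof -
  define cs :: "(real \<times> real \<times> real) list"
    where "cs = [(- 8, 4, 1), (3 / 2, 4, 2), (- 6, 5, 2), (- 3, 5, 3), (1, 7, 4)]"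
  define cs' where "cs' = map (\<lambda>(c, a, b). (c, a - 2, b)) (laplacian_terms cs)"
  have "u w = monomial_comb cs w" if "w \<in> ball 0 1" for w
    using cmonomial_of_nat[OF that, of 4 1] cmonomial_of_nat[OF that, of 4 2]
      cmonomial_of_nat[OF that, of 5 2] cmonomial_of_nat[OF that, of 5 3]
      cmonomial_of_nat[OF that, of 7 4]
    by (simp add: u_def cs_def monomial_comb_def)
  then have "has_wlap_on u (monomial_comb (laplacian_terms cs)) (ball 0 1)"
    by (intro has_wlap_on_cong[OF has_wlap_on_monomial_comb]) auto
  then have "wlap u w / w2 w = monomial_comb cs' w" if "w \<in> ball 0 1" for w
    using that by (simp add: wlap_eq_if_has_wlap_on monomial_comb_divide_w2 cs'_def)
  then have "has_wlap_on (\<lambda>w. wlap u w / w2 w) (monomial_comb (laplacian_terms cs')) (ball 0 1)"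
    by (intro has_wlap_on_cong[OF has_wlap_on_monomial_comb]) auto
  moreover have "monomial_comb (laplacian_terms cs') w = 0" for w
    by (simp add: cs'_def cs_def monomial_comb_def)
  ultimately show ?thesis
    unfolding w2_biharmonic_def by (simp add: wlap_eq_if_has_wlap_on)
qed

end
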